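(* There exists an instance with two agents $N=\{1,2\}$ and a finite item set $A$ with no externalities (i.e., $V_i(j,a)=0$ for all $a\in A$ and $i\ne j$) together with a complete allocation that is envy-free but does not satisfy PROP-Max.
   Context: Setting: agents $N=\{1,\dots,n\}$, finite item set $A$; a complete allocation $\pi$ partitions $A$ into bundles $\pi_1,\dots,\pi_n$; $\pi(a)$ is the agent receiving $a$; $V_i(j,a)\in\mathbb{R}$ is agent $i$'s value when item $a$ goes to agent $j$; $V_i(\pi)=\sum_{a\in A}V_i(\pi(a),a)$. $\pi^{i\leftrightarrow j}$ is $\pi$ with bundles of $i$ and $j$ swapped. $\pi$ is envy-free (EF) if there are no agents $i,j$ with $V_i(\pi^{i\leftrightarrow j})>V_i(\pi)$. With $V_i^{max}(a)=\max_{j\in N}V_i(j,a)$, $\pi$ satisfies PROP-Max if $V_i(\pi)\ge\frac1n\sum_{a\in A}V_i^{max}(a)$ for all $i\in N$. *)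

theory Defs
  imports Complex_Main
begin

text \<open>An allocation is a map \<sigma> from items to agents
(\<sigma> a is the agent receiving a). V i j a is agent i's value when item a goes to agent j.\<close>

definition complete_alloc :: "nat set \<Rightarrow> nat set \<Rightarrow> (nat \<Rightarrow> nat) \<Rightarrow> bool" where
  "complete_alloc N A \<sigma> \<longleftrightarrow> (\<forall>a\<in>A. \<sigma> a \<in> N)"

definition alloc_value :: "nat set \<Rightarrow> (nat \<Rightarrow> nat \<Rightarrow> nat \<Rightarrow> real) \<Rightarrow> nat \<Rightarrow> (nat \<Rightarrow> nat) \<Rightarrow> real" where
  "alloc_value A V i \<sigma> = (\<Sum>a\<in>A. V i (\<sigma> a) a)"

definition swap_bundles :: "(nat \<Rightarrow> nat) \<Rightarrow> nat \<Rightarrow> nat \<Rightarrow> (nat \<Rightarrow> nat)" where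
  "swap_bundles \<sigma> i j = (\<lambda>a. if \<sigma> a = i then j else if \<sigma> a = j then i else \<sigma> a)"

definition envy_free :: "nat set \<Rightarrow> nat set \<Rightarrow> (nat \<Rightarrow> nat \<Rightarrow> nat \<Rightarrow> real) \<Rightarrow> (nat \<Rightarrow> nat) \<Rightarrow> bool" where
  "envy_free N A V \<sigma> \<longleftrightarrow>
     \<not> (\<exists>i\<in>N. \<exists>j\<in>N. alloc_value A V i (swap_bundles \<sigma> i j) > alloc_value A V i \<sigma>)"

definition Vmax :: "nat set \<Rightarrow> (nat \<Rightarrow> nat \<Rightarrow> nat \<Rightarrow> real) \<Rightarrow> nat \<Rightarrow> nat \<Rightarrow> real" where
  "Vmax N V i a = Max ((\<lambda>j. V i j a) ` N)"

definition prop_max :: "nat set \<Rightarrow> nat set \<Rightarrow> (nat \<Rightarrow> nat \<Rightarrow> nat \<Rightarrow> real) \<Rightarrow> (nat \<Rightarrow> nat) \<Rightarrow> bool" where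
  "prop_max N A V \<sigma> \<longleftrightarrow>
     (\<forall>i\<in>N. alloc_value A V i \<sigma> \<ge> (1 / real (card N)) * (\<Sum>a\<in>A. Vmax N V i a))"

end

theory Submission
  imports Defs
begin

text \<open>With chores, envy-freeness no longer implies PROP-Max. Agent 1 receives a good
worth 1; agent 2 receives a good worth 2 to agent 1 together with a chore worth -2 to
agent 1, and agent 2 values nothing. Agent 1 values the other bundle at 0, so no one is
envious. PROP-Max, however, credits every item with its best placement, so the chore
counts 0 and agent 1's share is (1 + 2 + 0) / 2 = 3/2 > 1.\<close>

definition example_items :: "nat set" where
  "example_items = {0, 1, 2}"

definition example_valuation :: "nat \<Rightarrow> nat \<Rightarrow> nat \<Rightarrow> real" where
  "example_valuation i j a =
     (if i = 1 \<and> j = 1 then (if a = 0 then 1 else if a = 1 then 2 else -2) else 0)"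

definition example_alloc :: "nat \<Rightarrow> nat" where
  "example_alloc a = (if a = 0 then 1 else 2)"

lemmas example_defs = example_items_def example_valuation_def example_alloc_def

lemma example_no_externalities:
  "\<forall>i\<in>{1,2}. \<forall>j\<in>{1,2}. \<forall>a\<in>example_items. i \<noteq> j \<longrightarrow> example_valuation i j a = 0"
  by (simp add: example_valuation_def)

lemma example_complete_alloc: "complete_alloc {1,2} example_items example_alloc"
  by (simp add: complete_alloc_def example_defs)

lemma example_envy_free: "envy_free {1,2} example_items example_valuation example_alloc"
  by (simp add: envy_free_def alloc_value_def swap_bundles_def example_defs)

lemma example_alloc_value_agent1:
  "alloc_value example_items example_valuation 1 example_alloc = 1"
  by (simp add: alloc_value_def example_defs)

lemma example_Vmax_sum_agent1:
  "(\<Sum>a\<in>example_items. Vmax {1,2} example_valuation 1 a) = 3"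
  by (simp add: Vmax_def example_defs)

lemma example_not_prop_max: "\<not> prop_max {1,2} example_items example_valuation example_alloc"
  unfolding prop_max_def
  using example_alloc_value_agent1 example_Vmax_sum_agent1 by auto

theorem proposition1:
  shows "\<exists>(A::nat set) (V::nat \<Rightarrow> nat \<Rightarrow> nat \<Rightarrow> real) (\<sigma>::nat \<Rightarrow> nat).
           finite A \<and>
           (\<forall>i\<in>{1,2}. \<forall>j\<in>{1,2}. \<forall>a\<in>A. i \<noteq> j \<longrightarrow> V i j a = 0) \<and>
           complete_alloc {1,2} A \<sigma> \<and>
           envy_free {1,2} A V \<sigma> \<and>
           \<not> prop_max {1,2} A V \<sigma>"
proof (intro exI conjI)
  show "finite example_items" by (simp add: example_items_def)
qed (fact example_no_externalities example_complete_alloc example_envy_free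
       example_not_prop_max)+

end
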